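(* Let $M$ be a simple $L$-module and $m\ge 1$. Suppose $d^m\in\operatorname{ann}M$, $d^{m-1}\notin\operatorname{ann}M$, and $f(h)d^{m-1}M=0$ for some nonconstant polynomial $f\in\mathbb C[x]$. Then $M$ is finite-dimensional. The same holds with $d$ replaced by $u$. In particular, if $d^m\in\operatorname{ann}M$, $d^{m-1}\notin\operatorname{ann}M$ and $d^mu-s^mud^m\neq 0$ in $L$, then $M$ is finite-dimensional; likewise if $u^m\in\operatorname{ann}M$, $u^{m-1}\notin\operatorname{ann}M$ and $du^m-s^mu^md\neq 0$ in $L$.
   Context: Let $r,s,\gamma\in\mathbb C$ with $rs\neq 0$ and $\phi\in\mathbb C[x]$. The generalized down-up algebra $L=L(\phi,r,s,\gamma)$ is the associative $\mathbb C$-algebra generated by $u,d,h$ subject to $hu-ruh=\gamma u$, $dh-rhd=\gamma d$, $du-sud=\phi(h)$; it is a domain with basis $\{u^ih^jd^k\}$. Modules are left modules; $\operatorname{ann}M$ is the annihilator of $M$ in $L$ (with $d^0=u^0=1$). *)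

theory Defs
  imports Main "HOL-Computational_Algebra.Polynomial"
begin

datatype gen = GU | GD | GH

text \<open>Noncommutative polynomial expressions in u, d, h with complex coefficients
  (elements of the free algebra C<u,d,h>, up to the ring axioms).\<close>
datatype expr = Gen gen | Sc complex | Add expr expr | Mul expr expr

definition Sub :: "expr \<Rightarrow> expr \<Rightarrow> expr" where
  "Sub a b = Add a (Mul (Sc (-1)) b)"

fun pw :: "expr \<Rightarrow> nat \<Rightarrow> expr" where
  "pw a 0 = Sc 1"
| "pw a (Suc n) = Mul a (pw a n)"

fun horner :: "complex list \<Rightarrow> expr" where
  "horner [] = Sc 0"
| "horner (c # cs) = Add (Sc c) (Mul (Gen GH) (horner cs))"

definition hpoly :: "complex poly \<Rightarrow> expr" where
  "hpoly f = horner (coeffs f)"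

text \<open>Equality in L: the least congruence on expressions containing the axioms of a
  (unital associative) C-algebra and the defining relations
  hu - ruh = gamma u, dh - rhd = gamma d, du - sud = phi(h).\<close>
inductive eqL :: "complex poly \<Rightarrow> complex \<Rightarrow> complex \<Rightarrow> complex \<Rightarrow> expr \<Rightarrow> expr \<Rightarrow> bool"
  for \<phi> r s \<gamma> where
  refl: "eqL \<phi> r s \<gamma> a a"
| sym: "eqL \<phi> r s \<gamma> a b \<Longrightarrow> eqL \<phi> r s \<gamma> b a"
| trans: "eqL \<phi> r s \<gamma> a b \<Longrightarrow> eqL \<phi> r s \<gamma> b c \<Longrightarrow> eqL \<phi> r s \<gamma> a c"
| add_cong: "eqL \<phi> r s \<gamma> a a' \<Longrightarrow> eqL \<phi> r s \<gamma> b b' \<Longrightarrow> eqL \<phi> r s \<gamma> (Add a b) (Add a' b')"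
| mul_cong: "eqL \<phi> r s \<gamma> a a' \<Longrightarrow> eqL \<phi> r s \<gamma> b b' \<Longrightarrow> eqL \<phi> r s \<gamma> (Mul a b) (Mul a' b')"
| add_assoc: "eqL \<phi> r s \<gamma> (Add (Add a b) c) (Add a (Add b c))"
| add_comm: "eqL \<phi> r s \<gamma> (Add a b) (Add b a)"
| add_zero: "eqL \<phi> r s \<gamma> (Add a (Sc 0)) a"
| add_neg: "eqL \<phi> r s \<gamma> (Add a (Mul (Sc (-1)) a)) (Sc 0)"
| mul_assoc: "eqL \<phi> r s \<gamma> (Mul (Mul a b) c) (Mul a (Mul b c))"
| mul_one_left: "eqL \<phi> r s \<gamma> (Mul (Sc 1) a) a"
| mul_one_right: "eqL \<phi> r s \<gamma> (Mul a (Sc 1)) a"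
| distrib_left: "eqL \<phi> r s \<gamma> (Mul a (Add b c)) (Add (Mul a b) (Mul a c))"
| distrib_right: "eqL \<phi> r s \<gamma> (Mul (Add a b) c) (Add (Mul a c) (Mul b c))"
| sc_add: "eqL \<phi> r s \<gamma> (Add (Sc x) (Sc y)) (Sc (x + y))"
| sc_mul: "eqL \<phi> r s \<gamma> (Mul (Sc x) (Sc y)) (Sc (x * y))"
| sc_central: "eqL \<phi> r s \<gamma> (Mul (Sc x) a) (Mul a (Sc x))"
| rel_hu: "eqL \<phi> r s \<gamma> (Sub (Mul (Gen GH) (Gen GU)) (Mul (Sc r) (Mul (Gen GU) (Gen GH))))
                          (Mul (Sc \<gamma>) (Gen GU))"
| rel_dh: "eqL \<phi> r s \<gamma> (Sub (Mul (Gen GD) (Gen GH)) (Mul (Sc r) (Mul (Gen GH) (Gen GD))))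
                          (Mul (Sc \<gamma>) (Gen GD))"
| rel_du: "eqL \<phi> r s \<gamma> (Sub (Mul (Gen GD) (Gen GU)) (Mul (Sc s) (Mul (Gen GU) (Gen GD))))
                          (hpoly \<phi>)"

definition nonzeroL :: "complex poly \<Rightarrow> complex \<Rightarrow> complex \<Rightarrow> complex \<Rightarrow> expr \<Rightarrow> bool" where
  "nonzeroL \<phi> r s \<gamma> a \<longleftrightarrow> \<not> eqL \<phi> r s \<gamma> a (Sc 0)"

text \<open>A left module: a complex vector space (scalar multiplication sc) together with
  the operators by which u, d, h act.\<close>
fun act :: "(complex \<Rightarrow> 'v \<Rightarrow> 'v) \<Rightarrow> ('v \<Rightarrow> 'v) \<Rightarrow> ('v \<Rightarrow> 'v) \<Rightarrow> ('v \<Rightarrow> 'v)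
            \<Rightarrow> expr \<Rightarrow> 'v \<Rightarrow> 'v::ab_group_add" where
  "act sc U D H (Gen GU) = U"
| "act sc U D H (Gen GD) = D"
| "act sc U D H (Gen GH) = H"
| "act sc U D H (Sc c) = sc c"
| "act sc U D H (Add a b) = (\<lambda>v. act sc U D H a v + act sc U D H b v)"
| "act sc U D H (Mul a b) = (\<lambda>v. act sc U D H a (act sc U D H b v))"

definition is_L_module ::
  "complex poly \<Rightarrow> complex \<Rightarrow> complex \<Rightarrow> complex \<Rightarrow>
   (complex \<Rightarrow> 'v \<Rightarrow> 'v) \<Rightarrow> ('v \<Rightarrow> 'v) \<Rightarrow> ('v \<Rightarrow> 'v) \<Rightarrow> ('v \<Rightarrow> 'v::ab_group_add) \<Rightarrow> bool" where
  "is_L_module \<phi> r s \<gamma> sc U D H \<longleftrightarrow>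
     vector_space sc \<and> Vector_Spaces.linear sc sc U \<and> Vector_Spaces.linear sc sc D \<and>
     Vector_Spaces.linear sc sc H \<and>
     act sc U D H (Sub (Mul (Gen GH) (Gen GU)) (Mul (Sc r) (Mul (Gen GU) (Gen GH))))
       = act sc U D H (Mul (Sc \<gamma>) (Gen GU)) \<and>
     act sc U D H (Sub (Mul (Gen GD) (Gen GH)) (Mul (Sc r) (Mul (Gen GH) (Gen GD))))
       = act sc U D H (Mul (Sc \<gamma>) (Gen GD)) \<and>
     act sc U D H (Sub (Mul (Gen GD) (Gen GU)) (Mul (Sc s) (Mul (Gen GU) (Gen GD))))
       = act sc U D H (hpoly \<phi>)"

definition is_simple_L_module ::
  "complex poly \<Rightarrow> complex \<Rightarrow> complex \<Rightarrow> complex \<Rightarrow>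
   (complex \<Rightarrow> 'v \<Rightarrow> 'v) \<Rightarrow> ('v \<Rightarrow> 'v) \<Rightarrow> ('v \<Rightarrow> 'v) \<Rightarrow> ('v \<Rightarrow> 'v::ab_group_add) \<Rightarrow> bool" where
  "is_simple_L_module \<phi> r s \<gamma> sc U D H \<longleftrightarrow>
     is_L_module \<phi> r s \<gamma> sc U D H \<and> (UNIV :: 'v set) \<noteq> {0} \<and>
     (\<forall>W. module.subspace sc W \<and> (\<forall>w\<in>W. U w \<in> W \<and> D w \<in> W \<and> H w \<in> W)
          \<longrightarrow> W = {0} \<or> W = UNIV)"

text \<open>The annihilator of M in L (a set of representatives in the free algebra).\<close>
definition annL ::
  "(complex \<Rightarrow> 'v \<Rightarrow> 'v) \<Rightarrow> ('v \<Rightarrow> 'v) \<Rightarrow> ('v \<Rightarrow> 'v) \<Rightarrow> ('v \<Rightarrow> 'v::ab_group_add) \<Rightarrow> expr set" where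
  "annL sc U D H = {a. \<forall>v. act sc U D H a v = 0}"

definition fin_dim_module :: "(complex \<Rightarrow> 'v \<Rightarrow> 'v::ab_group_add) \<Rightarrow> bool" where
  "fin_dim_module sc \<longleftrightarrow> (\<exists>B. finite B \<and> module.span sc B = UNIV)"

end

theory Submission
  imports Defs "HOL-Computational_Algebra.Fundamental_Theorem_Algebra"
begin

(* Suppose d^(k+1) M = 0, d^k M <> 0 and f(h) d^k M = 0 with f <> 0.  Since h preserves
   ker d (relation dh - rhd = gamma d) and f splits over C, ker d contains an h-eigenvector w.
   The relations show that every u^i w is again an h-eigenvector and that d lowers the string:
   d u^(i+1) w = c_i u^i w.  A general linear-algebra lemma then gives finite dimension: if the
   string becomes linearly dependent it spans M, and otherwise nilpotency of d forces some
   c_k = 0, so u^(k+1) w, u^(k+2) w, ... span a nonzero submodule not containing w.  The case of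
   u is symmetric (using r, s <> 0).  For the commutator versions one proves in L the identities
   d^(k+1) u - s^(k+1) u d^(k+1) = g(h) d^k  and  d u^(k+1) - s^(k+1) u^(k+1) d = g(h) u^k;
   if d^(k+1) (resp. u^(k+1)) annihilates M, so does g(h) d^k (resp. g(h) u^k), with g <> 0. *)

declare eqL.trans [trans]

context
  fixes \<phi> :: "complex poly" and r s \<gamma> :: complex
begin

abbreviation equal_in_L (infix "\<approx>" 50) where "a \<approx> b \<equiv> eqL \<phi> r s \<gamma> a b"

lemma add_congL: "a \<approx> a' \<Longrightarrow> Add a b \<approx> Add a' b"
  by (rule eqL.add_cong, assumption, rule eqL.refl)

lemma add_congR: "b \<approx> b' \<Longrightarrow> Add a b \<approx> Add a b'"
  by (rule eqL.add_cong, rule eqL.refl, assumption)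

lemma mul_congL: "a \<approx> a' \<Longrightarrow> Mul a b \<approx> Mul a' b"
  by (rule eqL.mul_cong, assumption, rule eqL.refl)

lemma mul_congR: "b \<approx> b' \<Longrightarrow> Mul a b \<approx> Mul a b'"
  by (rule eqL.mul_cong, rule eqL.refl, assumption)

lemma sub_cong: "a \<approx> a' \<Longrightarrow> b \<approx> b' \<Longrightarrow> Sub a b \<approx> Sub a' b'"
  unfolding Sub_def by (intro eqL.add_cong mul_congR)

lemma add_zero_left: "Add (Sc 0) a \<approx> a"
  using eqL.add_comm eqL.add_zero eqL.trans by blast

lemma add_neg_left: "Add (Mul (Sc (-1)) b) b \<approx> Sc 0"
  using eqL.add_comm eqL.add_neg eqL.trans by blast

lemma mul_zero_left: "Mul (Sc 0) a \<approx> Sc 0"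
proof -
  have "Mul (Sc 0) a \<approx> Mul (Add (Sc 1) (Sc (-1))) a"
    using eqL.sc_add[of \<phi> r s \<gamma> 1 "-1"] by (simp add: mul_congL eqL.sym)
  also have "\<dots> \<approx> Add (Mul (Sc 1) a) (Mul (Sc (-1)) a)" by (rule eqL.distrib_right)
  also have "\<dots> \<approx> Add a (Mul (Sc (-1)) a)" by (rule add_congL, rule eqL.mul_one_left)
  also have "\<dots> \<approx> Sc 0" by (rule eqL.add_neg)
  finally show ?thesis .
qed

lemma mul_zero_right: "Mul a (Sc 0) \<approx> Sc 0"
  using eqL.sym[OF eqL.sc_central] mul_zero_left eqL.trans by blast

lemma scalar_pull: "Mul a (Mul (Sc x) b) \<approx> Mul (Sc x) (Mul a b)"
proof -
  have "Mul a (Mul (Sc x) b) \<approx> Mul (Mul a (Sc x)) b" by (rule eqL.sym, rule eqL.mul_assoc)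
  also have "\<dots> \<approx> Mul (Mul (Sc x) a) b" by (rule mul_congL, rule eqL.sym, rule eqL.sc_central)
  also have "\<dots> \<approx> Mul (Sc x) (Mul a b)" by (rule eqL.mul_assoc)
  finally show ?thesis .
qed

lemma scalar_mult: "z = x * y \<Longrightarrow> Mul (Sc x) (Mul (Sc y) b) \<approx> Mul (Sc z) b"
  using eqL.sym[OF eqL.mul_assoc] mul_congL[OF eqL.sc_mul] eqL.trans by blast

lemma scalar_add: "z = x + y \<Longrightarrow> Add (Mul (Sc x) a) (Mul (Sc y) a) \<approx> Mul (Sc z) a"
  using eqL.sym[OF eqL.distrib_right] mul_congL[OF eqL.sc_add] eqL.trans by blast

lemma add_swap_middle: "Add (Add a b) (Add c e) \<approx> Add (Add a c) (Add b e)"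
proof -
  have "Add (Add a b) (Add c e) \<approx> Add a (Add (Add b c) e)"
    using eqL.add_assoc add_congR[OF eqL.sym[OF eqL.add_assoc]] eqL.trans by blast
  also have "\<dots> \<approx> Add a (Add (Add c b) e)" by (rule add_congR, rule add_congL, rule eqL.add_comm)
  also have "\<dots> \<approx> Add (Add a c) (Add b e)"
    using add_congR[OF eqL.add_assoc] eqL.sym[OF eqL.add_assoc] eqL.trans by blast
  finally show ?thesis .
qed

lemma sub_telescope: "Add (Sub a b) (Sub b c) \<approx> Sub a c"
proof -
  let ?nb = "Mul (Sc (-1)) b" and ?nc = "Mul (Sc (-1)) c"
  have "Add (Add a ?nb) (Add b ?nc) \<approx> Add a (Add (Add ?nb b) ?nc)"
    using eqL.add_assoc add_congR[OF eqL.sym[OF eqL.add_assoc]] eqL.trans by blast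
  also have "\<dots> \<approx> Add a (Add (Sc 0) ?nc)" by (rule add_congR, rule add_congL, rule add_neg_left)
  also have "\<dots> \<approx> Add a ?nc" by (rule add_congR, rule add_zero_left)
  finally show ?thesis unfolding Sub_def .
qed

lemma sub_solve: "Sub a b \<approx> c \<Longrightarrow> a \<approx> Add b c"
proof -
  assume h: "Sub a b \<approx> c"
  let ?nb = "Mul (Sc (-1)) b"
  have "Add b c \<approx> Add (Add a ?nb) b"
    using add_congR[OF eqL.sym[OF h[unfolded Sub_def]]] eqL.add_comm eqL.trans by blast
  also have "\<dots> \<approx> Add a (Add ?nb b)" by (rule eqL.add_assoc)
  also have "\<dots> \<approx> Add a (Sc 0)" by (rule add_congR, rule add_neg_left)
  also have "\<dots> \<approx> a" by (rule eqL.add_zero)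
  finally show ?thesis by (rule eqL.sym)
qed

lemma mul_sub_left: "Mul x (Sub a b) \<approx> Sub (Mul x a) (Mul x b)"
  unfolding Sub_def using eqL.distrib_left add_congR[OF scalar_pull] eqL.trans by blast

lemma mul_sub_right: "Mul (Sub a b) x \<approx> Sub (Mul a x) (Mul b x)"
  unfolding Sub_def using eqL.distrib_right add_congR[OF eqL.mul_assoc] eqL.trans by blast

lemma hpoly_0: "hpoly 0 = Sc 0"
  by (simp add: hpoly_def)

lemma hpoly_pCons: "hpoly (pCons a p) \<approx> Add (Sc a) (Mul (Gen GH) (hpoly p))"
proof (cases "p = 0 \<and> a = 0")
  case True
  have "Add (Sc 0) (Mul (Gen GH) (Sc 0)) \<approx> Sc 0"
    using add_congR[OF mul_zero_right] eqL.add_zero eqL.trans by blast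
  then show ?thesis using True by (simp add: hpoly_0 eqL.sym)
next
  case False
  then have "coeffs (pCons a p) = a # coeffs p" by (auto simp: cCons_def)
  then show ?thesis by (simp add: hpoly_def eqL.refl)
qed

lemma hpoly_add: "hpoly (p + q) \<approx> Add (hpoly p) (hpoly q)"
proof (induction p arbitrary: q rule: pCons_induct)
  case 0
  then show ?case by (simp add: hpoly_0 eqL.sym[OF add_zero_left])
next
  case (pCons a p)
  obtain b q' where q: "q = pCons b q'" by (cases q)
  let ?h = "Gen GH"
  have "hpoly (pCons a p + q) \<approx> Add (Sc (a + b)) (Mul ?h (hpoly (p + q')))"
    unfolding q add_pCons by (rule hpoly_pCons)
  also have "\<dots> \<approx> Add (Add (Sc a) (Sc b)) (Add (Mul ?h (hpoly p)) (Mul ?h (hpoly q')))"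
    by (intro eqL.add_cong eqL.sym[OF eqL.sc_add] eqL.trans[OF mul_congR[OF pCons.IH]]
        eqL.distrib_left)
  also have "\<dots> \<approx> Add (Add (Sc a) (Mul ?h (hpoly p))) (Add (Sc b) (Mul ?h (hpoly q')))"
    by (rule add_swap_middle)
  also have "\<dots> \<approx> Add (hpoly (pCons a p)) (hpoly q)"
    unfolding q by (intro eqL.add_cong eqL.sym[OF hpoly_pCons])
  finally show ?case .
qed

lemma hpoly_smult: "hpoly (smult c p) \<approx> Mul (Sc c) (hpoly p)"
proof (induction p rule: pCons_induct)
  case 0
  then show ?case by (simp add: hpoly_0 eqL.sym[OF mul_zero_right])
next
  case (pCons a p)
  let ?h = "Gen GH"
  have "hpoly (smult c (pCons a p)) \<approx> Add (Sc (c * a)) (Mul ?h (hpoly (smult c p)))"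
    unfolding smult_pCons by (rule hpoly_pCons)
  also have "\<dots> \<approx> Add (Mul (Sc c) (Sc a)) (Mul (Sc c) (Mul ?h (hpoly p)))"
    by (intro eqL.add_cong eqL.sym[OF eqL.sc_mul] eqL.trans[OF mul_congR[OF pCons.IH]] scalar_pull)
  also have "\<dots> \<approx> Mul (Sc c) (hpoly (pCons a p))"
    by (intro eqL.trans[OF eqL.sym[OF eqL.distrib_left]] mul_congR eqL.sym[OF hpoly_pCons])
  finally show ?case .
qed

lemma hpoly_mul_add: "Add (Mul (hpoly p) X) (Mul (hpoly q) X) \<approx> Mul (hpoly (p + q)) X"
  using eqL.sym[OF eqL.distrib_right] mul_congL[OF eqL.sym[OF hpoly_add]] eqL.trans by blast

lemma hpoly_scale_mul: "Mul (Sc c) (Mul (hpoly p) X) \<approx> Mul (hpoly (smult c p)) X"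
  using eqL.sym[OF eqL.mul_assoc] mul_congL[OF eqL.sym[OF hpoly_smult]] eqL.trans by blast

lemma commute_past_h:
  assumes rel: "Mul X (Gen GH) \<approx> Add (Mul (Sc \<alpha>) (Mul (Gen GH) X)) (Mul (Sc \<beta>) X)"
  shows "Mul X (Mul (Gen GH) P) \<approx> Add (Mul (Sc \<alpha>) (Mul (Gen GH) (Mul X P))) (Mul (Sc \<beta>) (Mul X P))"
proof -
  let ?h = "Gen GH"
  have "Mul X (Mul ?h P) \<approx> Mul (Add (Mul (Sc \<alpha>) (Mul ?h X)) (Mul (Sc \<beta>) X)) P"
    using eqL.sym[OF eqL.mul_assoc] mul_congL[OF rel] eqL.trans by blast
  also have "\<dots> \<approx> Add (Mul (Mul (Sc \<alpha>) (Mul ?h X)) P) (Mul (Mul (Sc \<beta>) X) P)"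
    by (rule eqL.distrib_right)
  also have "\<dots> \<approx> Add (Mul (Sc \<alpha>) (Mul ?h (Mul X P))) (Mul (Sc \<beta>) (Mul X P))"
    by (intro eqL.add_cong eqL.trans[OF eqL.mul_assoc] mul_congR eqL.mul_assoc)
  finally show ?thesis .
qed

lemma hpoly_commute:
  assumes rel: "Mul X (Gen GH) \<approx> Add (Mul (Sc \<alpha>) (Mul (Gen GH) X)) (Mul (Sc \<beta>) X)"
  shows "\<exists>p'. Mul X (hpoly p) \<approx> Mul (hpoly p') X"
proof (induction p rule: pCons_induct)
  case 0
  have "Mul X (hpoly 0) \<approx> Mul (hpoly 0) X"
    unfolding hpoly_0 using mul_zero_right mul_zero_left eqL.sym eqL.trans by blast
  then show ?case by blast
next
  case (pCons a p)
  then obtain p' where IH: "Mul X (hpoly p) \<approx> Mul (hpoly p') X" by blast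
  let ?h = "Gen GH" and ?q = "pCons a (smult \<alpha> p') + smult \<beta> p'"
  have "Mul X (hpoly (pCons a p)) \<approx> Add (Mul X (Sc a)) (Mul X (Mul ?h (hpoly p)))"
    using mul_congR[OF hpoly_pCons] eqL.distrib_left eqL.trans by blast
  also have "\<dots> \<approx> Add (Mul (Sc a) X)
      (Add (Mul (Sc \<alpha>) (Mul ?h (Mul (hpoly p') X))) (Mul (Sc \<beta>) (Mul (hpoly p') X)))"
    by (intro eqL.add_cong eqL.sym[OF eqL.sc_central] eqL.trans[OF commute_past_h[OF rel]]
        mul_congR IH)
  also have "\<dots> \<approx> Add (Mul (Sc a) X)
      (Add (Mul (Mul (Sc \<alpha>) (Mul ?h (hpoly p'))) X) (Mul (Mul (Sc \<beta>) (hpoly p')) X))"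
    by (intro add_congR eqL.add_cong eqL.sym[OF eqL.mul_assoc]
        eqL.trans[OF mul_congR[OF eqL.sym[OF eqL.mul_assoc]]])
  also have "\<dots> \<approx> Mul (Add (Add (Sc a) (Mul (Sc \<alpha>) (Mul ?h (hpoly p')))) (Mul (Sc \<beta>) (hpoly p'))) X"
    using eqL.sym[OF eqL.add_assoc] add_congR[OF eqL.sym[OF eqL.distrib_right]]
      eqL.sym[OF eqL.distrib_right] eqL.trans mul_congL by metis
  also have "\<dots> \<approx> Mul (hpoly ?q) X"
  proof (rule mul_congL)
    have "Add (Sc a) (Mul (Sc \<alpha>) (Mul ?h (hpoly p'))) \<approx> hpoly (pCons a (smult \<alpha> p'))"
      using add_congR[OF eqL.trans[OF eqL.sym[OF scalar_pull] mul_congR[OF eqL.sym[OF hpoly_smult]]]]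
        eqL.sym[OF hpoly_pCons] eqL.trans by blast
    then show "Add (Add (Sc a) (Mul (Sc \<alpha>) (Mul ?h (hpoly p')))) (Mul (Sc \<beta>) (hpoly p')) \<approx> hpoly ?q"
      using eqL.add_cong[OF _ eqL.sym[OF hpoly_smult]] eqL.sym[OF hpoly_add] eqL.trans by blast
  qed
  finally show ?case by blast
qed


lemma d_h_relation:
  "Mul (Gen GD) (Gen GH) \<approx> Add (Mul (Sc r) (Mul (Gen GH) (Gen GD))) (Mul (Sc \<gamma>) (Gen GD))"
  by (rule sub_solve, rule eqL.rel_dh)

lemma u_h_relation:
  assumes r: "r \<noteq> 0"
  shows "Mul (Gen GU) (Gen GH) \<approx> Add (Mul (Sc (1/r)) (Mul (Gen GH) (Gen GU))) (Mul (Sc (-\<gamma>/r)) (Gen GU))"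
proof -
  let ?Y = "Mul (Gen GU) (Gen GH)" and ?u = "Gen GU" and ?N = "Mul (Sc (-\<gamma>/r)) (Gen GU)"
  have hu: "Mul (Gen GH) ?u \<approx> Add (Mul (Sc r) ?Y) (Mul (Sc \<gamma>) ?u)"
    by (rule sub_solve, rule eqL.rel_hu)
  have "Add (Mul (Sc (1/r)) (Mul (Gen GH) ?u)) ?N
      \<approx> Add (Add (Mul (Sc (1/r)) (Mul (Sc r) ?Y)) (Mul (Sc (1/r)) (Mul (Sc \<gamma>) ?u))) ?N"
    using add_congL[OF eqL.trans[OF mul_congR[OF hu] eqL.distrib_left]] .
  also have "\<dots> \<approx> Add (Mul (Sc 1) ?Y) (Add (Mul (Sc (\<gamma>/r)) ?u) ?N)"
    using r by (intro eqL.trans[OF _ eqL.add_assoc] add_congL eqL.add_cong scalar_mult) simp_all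
  also have "\<dots> \<approx> Add ?Y (Mul (Sc 0) ?u)"
    by (intro eqL.add_cong eqL.mul_one_left scalar_add) simp
  also have "\<dots> \<approx> ?Y"
    using add_congR[OF mul_zero_left] eqL.add_zero eqL.trans by blast
  finally show ?thesis by (rule eqL.sym)
qed

text \<open>Two identities valid for arbitrary a, b, X, which drive the induction for the commutator
  formulas below (there a = d, b = u, t = s and X is a power of d resp. u):
    a (X b - c b X) + c (a b - t b a) X = a X b - c t b (a X),
    (a b - t b a) X + t b (a X - c X a) = a (b X) - t c (b X) a.\<close>

lemma commutator_step_left:
  "Add (Mul a (Sub (Mul X b) (Mul (Sc c) (Mul b X))))
       (Mul (Sc c) (Mul (Sub (Mul a b) (Mul (Sc t) (Mul b a))) X))
   \<approx> Sub (Mul (Mul a X) b) (Mul (Sc (c * t)) (Mul b (Mul a X)))"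
proof -
  let ?B = "Mul (Sc c) (Mul (Mul a b) X)"
  have "Mul a (Sub (Mul X b) (Mul (Sc c) (Mul b X))) \<approx> Sub (Mul (Mul a X) b) ?B"
    by (intro eqL.trans[OF mul_sub_left] sub_cong eqL.sym[OF eqL.mul_assoc]
        eqL.trans[OF scalar_pull] mul_congR)
  moreover have "Mul (Sc c) (Mul (Sub (Mul a b) (Mul (Sc t) (Mul b a))) X)
      \<approx> Sub ?B (Mul (Sc (c * t)) (Mul b (Mul a X)))"
  proof -
    have "Mul (Sc c) (Mul (Mul (Sc t) (Mul b a)) X) \<approx> Mul (Sc c) (Mul (Sc t) (Mul (Mul b a) X))"
      by (rule mul_congR, rule eqL.mul_assoc)
    also have "\<dots> \<approx> Mul (Sc (c * t)) (Mul (Mul b a) X)" by (rule scalar_mult) simp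
    also have "\<dots> \<approx> Mul (Sc (c * t)) (Mul b (Mul a X))" by (rule mul_congR, rule eqL.mul_assoc)
    finally have "Mul (Sc c) (Mul (Mul (Sc t) (Mul b a)) X) \<approx> Mul (Sc (c * t)) (Mul b (Mul a X))" .
    then show ?thesis
      using eqL.trans[OF mul_congR[OF mul_sub_right] mul_sub_left] sub_cong[OF eqL.refl]
        eqL.trans by blast
  qed
  ultimately show ?thesis
    using eqL.add_cong sub_telescope eqL.trans by blast
qed

lemma commutator_step_right:
  "Add (Mul (Sub (Mul a b) (Mul (Sc t) (Mul b a))) X)
       (Mul (Sc t) (Mul b (Sub (Mul a X) (Mul (Sc c) (Mul X a)))))
   \<approx> Sub (Mul a (Mul b X)) (Mul (Sc (t * c)) (Mul (Mul b X) a))"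
proof -
  let ?B = "Mul (Sc t) (Mul b (Mul a X))"
  have "Mul (Sub (Mul a b) (Mul (Sc t) (Mul b a))) X \<approx> Sub (Mul a (Mul b X)) ?B"
    by (intro eqL.trans[OF mul_sub_right] sub_cong eqL.mul_assoc
        eqL.trans[OF eqL.mul_assoc] mul_congR)
  moreover have "Mul (Sc t) (Mul b (Sub (Mul a X) (Mul (Sc c) (Mul X a))))
      \<approx> Sub ?B (Mul (Sc (t * c)) (Mul (Mul b X) a))"
  proof -
    have "Mul (Sc t) (Mul b (Mul (Sc c) (Mul X a))) \<approx> Mul (Sc t) (Mul (Sc c) (Mul b (Mul X a)))"
      by (rule mul_congR, rule scalar_pull)
    also have "\<dots> \<approx> Mul (Sc (t * c)) (Mul b (Mul X a))" by (rule scalar_mult) simp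
    also have "\<dots> \<approx> Mul (Sc (t * c)) (Mul (Mul b X) a)"
      by (rule mul_congR, rule eqL.sym, rule eqL.mul_assoc)
    finally have "Mul (Sc t) (Mul b (Mul (Sc c) (Mul X a))) \<approx> Mul (Sc (t * c)) (Mul (Mul b X) a)" .
    then show ?thesis
      using eqL.trans[OF mul_congR[OF mul_sub_left] mul_sub_left] sub_cong[OF eqL.refl]
        eqL.trans by blast
  qed
  ultimately show ?thesis
    using eqL.add_cong sub_telescope eqL.trans by blast
qed

lemma hpoly_pass:
  assumes "Mul X (hpoly g) \<approx> Mul (hpoly g') X"
  shows "Mul X (Mul (hpoly g) Y) \<approx> Mul (hpoly g') (Mul X Y)"
proof -
  have "Mul X (Mul (hpoly g) Y) \<approx> Mul (Mul (hpoly g') X) Y"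
    by (rule eqL.trans[OF eqL.sym[OF eqL.mul_assoc] mul_congL[OF assms]])
  also have "\<dots> \<approx> Mul (hpoly g') (Mul X Y)" by (rule eqL.mul_assoc)
  finally show ?thesis .
qed

lemma d_power_commutator:
  "\<exists>g. Sub (Mul (pw (Gen GD) (Suc k)) (Gen GU)) (Mul (Sc (s ^ Suc k)) (Mul (Gen GU) (pw (Gen GD) (Suc k))))
        \<approx> Mul (hpoly g) (pw (Gen GD) k)"
proof (induction k)
  case 0
  have "Sub (Mul (Mul (Gen GD) (Sc 1)) (Gen GU)) (Mul (Sc s) (Mul (Gen GU) (Mul (Gen GD) (Sc 1))))
      \<approx> Mul (hpoly \<phi>) (Sc 1)"
    by (intro eqL.trans[OF _ eqL.sym[OF eqL.mul_one_right]] eqL.trans[OF _ eqL.rel_du] sub_cong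
        mul_congL mul_congR eqL.mul_one_right)
  then show ?case by auto
next
  case (Suc k)
  let ?d = "Gen GD" and ?u = "Gen GU" and ?c = "s ^ Suc k"
  let ?D = "pw ?d (Suc k)" and ?R = "Sub (Mul ?d ?u) (Mul (Sc s) (Mul ?u ?d))"
  obtain g where IH: "Sub (Mul ?D ?u) (Mul (Sc ?c) (Mul ?u ?D)) \<approx> Mul (hpoly g) (pw ?d k)"
    using Suc by blast
  obtain g' where comm: "Mul ?d (hpoly g) \<approx> Mul (hpoly g') ?d"
    using hpoly_commute[OF d_h_relation] by blast
  have split: "pw ?d (Suc (Suc k)) = Mul ?d ?D" "s ^ Suc (Suc k) = ?c * s"
    by (simp_all add: mult.commute)
  have "Sub (Mul (pw ?d (Suc (Suc k))) ?u) (Mul (Sc (s ^ Suc (Suc k))) (Mul ?u (pw ?d (Suc (Suc k)))))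
      \<approx> Add (Mul ?d (Sub (Mul ?D ?u) (Mul (Sc ?c) (Mul ?u ?D)))) (Mul (Sc ?c) (Mul ?R ?D))"
    unfolding split by (rule eqL.sym, rule commutator_step_left)
  also have "\<dots> \<approx> Add (Mul (hpoly g') ?D) (Mul (hpoly (smult ?c \<phi>)) ?D)"
  proof (rule eqL.add_cong)
    show "Mul ?d (Sub (Mul ?D ?u) (Mul (Sc ?c) (Mul ?u ?D))) \<approx> Mul (hpoly g') ?D"
      using eqL.trans[OF mul_congR[OF IH] hpoly_pass[OF comm]] by simp
    show "Mul (Sc ?c) (Mul ?R ?D) \<approx> Mul (hpoly (smult ?c \<phi>)) ?D"
      by (rule eqL.trans[OF mul_congR[OF mul_congL[OF eqL.rel_du]] hpoly_scale_mul])
  qed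
  also have "\<dots> \<approx> Mul (hpoly (g' + smult ?c \<phi>)) ?D" by (rule hpoly_mul_add)
  finally show ?case by blast
qed

lemma u_power_commutator:
  assumes r: "r \<noteq> 0"
  shows "\<exists>g. Sub (Mul (Gen GD) (pw (Gen GU) (Suc k))) (Mul (Sc (s ^ Suc k)) (Mul (pw (Gen GU) (Suc k)) (Gen GD)))
        \<approx> Mul (hpoly g) (pw (Gen GU) k)"
proof (induction k)
  case 0
  have "Sub (Mul (Gen GD) (Mul (Gen GU) (Sc 1))) (Mul (Sc s) (Mul (Mul (Gen GU) (Sc 1)) (Gen GD)))
      \<approx> Mul (hpoly \<phi>) (Sc 1)"
    by (intro eqL.trans[OF _ eqL.sym[OF eqL.mul_one_right]] eqL.trans[OF _ eqL.rel_du] sub_cong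
        mul_congL mul_congR eqL.mul_one_right)
  then show ?case by auto
next
  case (Suc k)
  let ?d = "Gen GD" and ?u = "Gen GU" and ?c = "s ^ Suc k"
  let ?V = "pw ?u (Suc k)" and ?R = "Sub (Mul ?d ?u) (Mul (Sc s) (Mul ?u ?d))"
  obtain g where IH: "Sub (Mul ?d ?V) (Mul (Sc ?c) (Mul ?V ?d)) \<approx> Mul (hpoly g) (pw ?u k)"
    using Suc by blast
  obtain g' where comm: "Mul ?u (hpoly g) \<approx> Mul (hpoly g') ?u"
    using hpoly_commute[OF u_h_relation[OF r]] by blast
  have split: "pw ?u (Suc (Suc k)) = Mul ?u ?V" "s ^ Suc (Suc k) = s * ?c"
    by simp_all
  have "Sub (Mul ?d (pw ?u (Suc (Suc k)))) (Mul (Sc (s ^ Suc (Suc k))) (Mul (pw ?u (Suc (Suc k))) ?d))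
      \<approx> Add (Mul ?R ?V) (Mul (Sc s) (Mul ?u (Sub (Mul ?d ?V) (Mul (Sc ?c) (Mul ?V ?d)))))"
    unfolding split by (rule eqL.sym, rule commutator_step_right)
  also have "\<dots> \<approx> Add (Mul (hpoly \<phi>) ?V) (Mul (hpoly (smult s g')) ?V)"
  proof (rule eqL.add_cong)
    show "Mul ?R ?V \<approx> Mul (hpoly \<phi>) ?V" by (rule mul_congL, rule eqL.rel_du)
    show "Mul (Sc s) (Mul ?u (Sub (Mul ?d ?V) (Mul (Sc ?c) (Mul ?V ?d)))) \<approx> Mul (hpoly (smult s g')) ?V"
      using eqL.trans[OF mul_congR[OF eqL.trans[OF mul_congR[OF IH] hpoly_pass[OF comm]]]
        hpoly_scale_mul] by simp
  qed
  also have "\<dots> \<approx> Mul (hpoly (\<phi> + smult s g')) ?V" by (rule hpoly_mul_add)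
  finally show ?case by blast
qed

end

context vector_space
begin

lemma
  assumes "Vector_Spaces.linear scale scale f"
  shows linear_self_zero: "f 0 = 0"
    and linear_self_add: "f (x + y) = f x + f y"
    and linear_self_scale: "f (c *s x) = c *s f x"
  using assms by (simp_all add: linear_iff_module_hom module_hom.zero module_hom.add module_hom.scale)

lemma scale_solve:
  assumes "a \<noteq> 0" and "a *s x = b *s y"
  shows "x = (b / a) *s y"
proof -
  have "x = (1 / a) *s (a *s x)" using assms(1) by simp
  then show ?thesis using assms(2) by simp
qed

lemma linear_maps_span:
  assumes T: "Vector_Spaces.linear scale scale T" and gen: "\<And>y. y \<in> S \<Longrightarrow> T y \<in> span S'"
    and y: "y \<in> span S"
  shows "T y \<in> span S'"
  using y
proof (induction rule: span_induct_alt)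
  case base
  then show ?case using linear_self_zero[OF T] by (simp add: span_zero)
next
  case (step c x y)
  then show ?case
    using gen linear_self_add[OF T] linear_self_scale[OF T] by (simp add: span_add span_scale)
qed

lemma string_in_prefix_span:
  fixes x :: "nat \<Rightarrow> 'b"
  assumes A: "Vector_Spaces.linear scale scale A" and step: "\<And>i. x (Suc i) = A (x i)"
    and dep: "x n \<in> span (x ` {..<n})"
  shows "x j \<in> span (x ` {..<n})"
proof (induction j)
  case 0
  then show ?case using dep by (cases n) (auto intro: span_base)
next
  case (Suc j)
  have "A y \<in> span (x ` {..<n})" if "y \<in> span (x ` {..<n})" for y
  proof (rule linear_maps_span[OF A _ that])
    fix z assume "z \<in> x ` {..<n}"
    then obtain i where "i < n" "z = x i" by auto
    then show "A z \<in> span (x ` {..<n})"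
    proof (cases "Suc i < n")
      case True
      then have "x (Suc i) \<in> x ` {..<n}" by blast
      then show ?thesis using \<open>z = x i\<close> step[of i] by (simp add: span_base)
    next
      case False
      then have "n = Suc i" using \<open>i < n\<close> by simp
      then show ?thesis using \<open>z = x i\<close> step[of i] dep by simp
    qed
  qed
  then show ?case using Suc step by simp
qed

lemma head_not_in_tail_span:
  fixes x :: "nat \<Rightarrow> 'b"
  assumes indep: "\<And>n. x n \<notin> span (x ` {..<n})" and i: "i < K"
  shows "x i \<notin> span (x ` {K..})"
proof
  assume "x i \<in> span (x ` {K..})"
  then have "\<exists>N. x i \<in> span (x ` {K..<N})"
  proof (induction rule: span_induct_alt)
    case base
    then show ?case by (auto intro: span_zero)
  next
    case (step c z y)
    then obtain N j where N: "y \<in> span (x ` {K..<N})" and j: "j \<ge> K" "z = x j" by auto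
    let ?M = "max N (Suc j)"
    have "y \<in> span (x ` {K..<?M})" "z \<in> span (x ` {K..<?M})"
      using N j by (auto intro: span_base elim!: subsetD[OF span_mono, rotated])
    then show ?case by (blast intro: span_add span_scale)
  qed
  then obtain N where N: "x i \<in> span (x ` {K..<N})" by blast
  have "x i \<notin> span (x ` {K..<N})" for N
  proof (induction N)
    case 0
    then show ?case using indep[of i] span_zero by auto
  next
    case (Suc N)
    show ?case
    proof (cases "N < K")
      case True
      then show ?thesis using indep[of i] span_zero by auto
    next
      case False
      then have eq: "x ` {K..<Suc N} = insert (x N) (x ` {K..<N})"
        by (auto simp: atLeastLessThanSuc)
      show ?thesis
      proof
        assume "x i \<in> span (x ` {K..<Suc N})"
        then have "x N \<in> span (insert (x i) (x ` {K..<N}))"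
          using in_span_insert Suc eq by metis
        moreover have "insert (x i) (x ` {K..<N}) \<subseteq> x ` {..<N}" using False i by auto
        ultimately show False using indep span_mono by blast
      qed
    qed
  qed
  then show False using N by blast
qed

lemma lowering_power:
  fixes x :: "nat \<Rightarrow> 'b"
  assumes B: "Vector_Spaces.linear scale scale B" and low: "\<And>i. B (x (Suc i)) = c i *s x i"
  shows "(B ^^ j) (x (i + j)) = (\<Prod>t<j. c (i + t)) *s x i"
proof (induction j arbitrary: i)
  case 0
  then show ?case by simp
next
  case (Suc j)
  have "(B ^^ Suc j) (x (i + Suc j)) = B ((B ^^ j) (x (Suc i + j)))" by simp
  also have "\<dots> = (\<Prod>t<j. c (Suc i + t)) *s (c i *s x i)"
    unfolding Suc.IH[of "Suc i"] linear_self_scale[OF B] low ..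
  also have "\<dots> = (\<Prod>t<Suc j. c (i + t)) *s x i"
    by (simp add: prod.lessThan_Suc_shift mult.commute del: prod.lessThan_Suc)
  finally show ?case .
qed

context
  fixes A B H :: "'b \<Rightarrow> 'b"
  assumes A: "Vector_Spaces.linear scale scale A" and B: "Vector_Spaces.linear scale scale B"
    and H: "Vector_Spaces.linear scale scale H"
    and irreducible: "\<And>W. subspace W \<Longrightarrow> (\<forall>w\<in>W. A w \<in> W \<and> B w \<in> W \<and> H w \<in> W) \<Longrightarrow>
      W = {0} \<or> W = UNIV"
begin

lemma invariant_span_is_UNIV:
  fixes x :: "nat \<Rightarrow> 'b"
  assumes gen: "\<And>i. i \<in> I \<Longrightarrow> A (x i) \<in> span (x ` I) \<and> B (x i) \<in> span (x ` I) \<and> H (x i) \<in> span (x ` I)"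
    and v: "v \<in> span (x ` I)" "v \<noteq> 0"
  shows "span (x ` I) = UNIV"
proof -
  have "\<forall>y\<in>span (x ` I). A y \<in> span (x ` I) \<and> B y \<in> span (x ` I) \<and> H y \<in> span (x ` I)"
  proof (intro ballI conjI)
    fix y assume y: "y \<in> span (x ` I)"
    show "A y \<in> span (x ` I)" by (rule linear_maps_span[OF A _ y]) (use gen in auto)
    show "B y \<in> span (x ` I)" by (rule linear_maps_span[OF B _ y]) (use gen in auto)
    show "H y \<in> span (x ` I)" by (rule linear_maps_span[OF H _ y]) (use gen in auto)
  qed
  then show ?thesis using irreducible[OF subspace_span] v by blast
qed

lemma weight_string_finite_dim:
  assumes w: "w \<noteq> 0" "B w = 0"
    and eigen: "\<And>i. \<exists>\<mu>. H ((A ^^ i) w) = \<mu> *s (A ^^ i) w"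
    and lowering: "\<And>i. \<exists>c. B ((A ^^ Suc i) w) = c *s (A ^^ i) w"
    and nilpotent: "\<And>v. (B ^^ m) v = 0"
  shows "\<exists>S. finite S \<and> span S = UNIV"
proof -
  define x where "x i = (A ^^ i) w" for i
  have step: "x (Suc i) = A (x i)" for i by (simp add: x_def)
  obtain \<mu> where \<mu>: "\<And>i. H (x i) = \<mu> i *s x i" using eigen unfolding x_def by metis
  obtain c where c: "\<And>i. B (x (Suc i)) = c i *s x i" using lowering unfolding x_def by metis
  have x0: "x 0 = w" by (simp add: x_def)
  show ?thesis
  proof (cases "\<exists>n. x n \<in> span (x ` {..<n})")
    case True
    then obtain n where n: "x n \<in> span (x ` {..<n})" by blast
    have "span (x ` UNIV) = UNIV"
    proof (rule invariant_span_is_UNIV)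
      fix i :: nat
      have "B (x i) \<in> span (range x)"
        using w(2) x0 c by (cases i) (simp_all add: span_zero span_scale span_base)
      then show "A (x i) \<in> span (range x) \<and> B (x i) \<in> span (range x) \<and> H (x i) \<in> span (range x)"
        unfolding step[symmetric] \<mu> by (simp add: span_scale span_base)
    qed (use x0 w(1) in \<open>auto intro: span_base\<close>)
    moreover have "range x \<subseteq> span (x ` {..<n})"
      using string_in_prefix_span[OF A step n] by blast
    ultimately have "span (x ` {..<n}) = UNIV"
      by (metis span_minimal subspace_span top.extremum_uniqueI)
    then show ?thesis by blast
  next
    case False
    then have indep: "\<And>n. x n \<notin> span (x ` {..<n})" by blast
    have "(\<Prod>t<m. c t) *s x 0 = 0"
      using lowering_power[of B x c m 0, OF B c] nilpotent by simp
    then obtain k where k: "k < m" "c k = 0" using x0 w(1) by auto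
    have "span (x ` {Suc k..}) = UNIV"
    proof (rule invariant_span_is_UNIV)
      fix i :: nat assume "i \<in> {Suc k..}"
      then obtain j where j: "i = Suc j" "k \<le> j" by (cases i) auto
      have "B (x i) \<in> span (x ` {Suc k..})"
      proof (cases "j = k")
        case True
        then show ?thesis using j c[of j] k(2) by (simp add: span_zero)
      next
        case False
        then have "x j \<in> x ` {Suc k..}" using j(2) by simp
        then show ?thesis using j c[of j] by (simp add: span_scale span_base)
      qed
      moreover have "x (Suc i) \<in> x ` {Suc k..}" "x i \<in> x ` {Suc k..}" using j by auto
      ultimately show "A (x i) \<in> span (x ` {Suc k..}) \<and> B (x i) \<in> span (x ` {Suc k..}) \<and>
          H (x i) \<in> span (x ` {Suc k..})"
        unfolding step[symmetric] \<mu> by (simp add: span_scale span_base)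
    next
      show "x (Suc k) \<in> span (x ` {Suc k..})" by (auto intro: span_base)
      show "x (Suc k) \<noteq> 0" using indep[of "Suc k"] span_zero by metis
    qed
    then show ?thesis using head_not_in_tail_span[OF indep, of 0 "Suc k"] by simp
  qed
qed

end

end

locale L_module =
  fixes \<phi> :: "complex poly" and r s \<gamma> :: complex
    and sc :: "complex \<Rightarrow> 'v \<Rightarrow> 'v::ab_group_add" and U D H :: "'v \<Rightarrow> 'v"
  assumes module: "is_L_module \<phi> r s \<gamma> sc U D H"
begin

sublocale V: vector_space sc
  using module by (simp add: is_L_module_def)

abbreviation lin :: "('v \<Rightarrow> 'v) \<Rightarrow> bool" where
  "lin f \<equiv> Vector_Spaces.linear sc sc f"

lemma linear_U: "lin U" and linear_D: "lin D" and linear_H: "lin H"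
  using module by (simp_all add: is_L_module_def)

lemma linear_act: "lin (act sc U D H a)"
proof (induction a)
  case (Gen g)
  then show ?case using linear_U linear_D linear_H by (cases g) auto
next
  case (Sc c)
  then show ?case by (simp add: V.linear_scale_self)
next
  case (Add a b)
  then show ?case
    unfolding act.simps Vector_Spaces.linear_iff
    using V.vector_space_axioms V.linear_self_add[OF Add.IH(1)] V.linear_self_add[OF Add.IH(2)]
      V.linear_self_scale[OF Add.IH(1)] V.linear_self_scale[OF Add.IH(2)]
    by (simp add: algebra_simps V.scale_right_distrib)
next
  case (Mul a b)
  then show ?case using Vector_Spaces.linear_compose[OF Mul(2) Mul(1)] by (simp add: comp_def)
qed

lemma h_u_rule: "H (U v) = sc r (U (H v)) + sc \<gamma> (U v)"
proof -
  have "act sc U D H (Sub (Mul (Gen GH) (Gen GU)) (Mul (Sc r) (Mul (Gen GU) (Gen GH)))) v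
      = act sc U D H (Mul (Sc \<gamma>) (Gen GU)) v"
    using module unfolding is_L_module_def by simp
  then show ?thesis by (simp add: Sub_def algebra_simps)
qed

lemma d_h_rule: "D (H v) = sc r (H (D v)) + sc \<gamma> (D v)"
proof -
  have "act sc U D H (Sub (Mul (Gen GD) (Gen GH)) (Mul (Sc r) (Mul (Gen GH) (Gen GD)))) v
      = act sc U D H (Mul (Sc \<gamma>) (Gen GD)) v"
    using module unfolding is_L_module_def by simp
  then show ?thesis by (simp add: Sub_def algebra_simps)
qed

lemma d_u_rule: "D (U v) = sc s (U (D v)) + act sc U D H (hpoly \<phi>) v"
proof -
  have "act sc U D H (Sub (Mul (Gen GD) (Gen GU)) (Mul (Sc s) (Mul (Gen GU) (Gen GD)))) v
      = act sc U D H (hpoly \<phi>) v"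
    using module unfolding is_L_module_def by simp
  then show ?thesis by (simp add: Sub_def algebra_simps)
qed

lemma act_respects_eqL: "eqL \<phi> r s \<gamma> a b \<Longrightarrow> act sc U D H a = act sc U D H b"
proof (induction rule: eqL.induct)
  case (distrib_left a b c)
  then show ?case using V.linear_self_add[OF linear_act[of a]] by auto
next
  case (sc_central x a)
  then show ?case using V.linear_self_scale[OF linear_act[of a]] by auto
next
  case rel_hu
  then show ?case using module unfolding is_L_module_def by simp
next
  case rel_dh
  then show ?case using module unfolding is_L_module_def by simp
next
  case rel_du
  then show ?case using module unfolding is_L_module_def by simp
qed (auto simp: fun_eq_iff algebra_simps V.scale_left_distrib)

lemma act_pw: "act sc U D H (pw a n) v = (act sc U D H a ^^ n) v"
  by (induction n arbitrary: v) auto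

abbreviation hact :: "complex poly \<Rightarrow> 'v \<Rightarrow> 'v" where
  "hact p \<equiv> act sc U D H (hpoly p)"

lemma hact_0: "hact 0 v = 0"
  by (simp add: hpoly_0)

lemma hact_pCons: "hact (pCons a p) v = sc a v + H (hact p v)"
  using act_respects_eqL[OF hpoly_pCons] by (simp add: fun_eq_iff)

lemma hact_add: "hact (p + q) v = hact p v + hact q v"
  using act_respects_eqL[OF hpoly_add] by (simp add: fun_eq_iff)

lemma hact_smult: "hact (smult c p) v = sc c (hact p v)"
  using act_respects_eqL[OF hpoly_smult] by (simp add: fun_eq_iff)

lemma hact_eigenvector: "H y = sc \<mu> y \<Longrightarrow> hact p y = sc (poly p \<mu>) y"
proof (induction p rule: pCons_induct)
  case 0
  then show ?case by (simp add: hact_0)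
next
  case (pCons a p)
  then have "hact (pCons a p) y = sc a y + sc (poly p \<mu>) (sc \<mu> y)"
    by (simp add: hact_pCons V.linear_self_scale[OF linear_H])
  also have "\<dots> = sc (poly (pCons a p) \<mu>) y"
    by (simp add: V.scale_left_distrib algebra_simps)
  finally show ?case .
qed

text \<open>If H preserves the kernel of a linear T, and f(H) kills a nonzero vector of that kernel
  for some f \<noteq> 0, then the kernel contains an eigenvector of H (C is algebraically closed).\<close>

lemma hact_preserves_kernel:
  assumes T: "lin T" and TH: "\<And>y. T y = 0 \<Longrightarrow> T (H y) = 0" and y: "T y = 0"
  shows "T (hact p y) = 0"
proof (induction p rule: pCons_induct)
  case 0
  then show ?case using V.linear_self_zero[OF T] by (simp add: hact_0)
next
  case (pCons a p)
  then show ?case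
    using TH y by (simp add: hact_pCons V.linear_self_add[OF T] V.linear_self_scale[OF T])
qed

lemma kernel_eigenvector:
  assumes T: "lin T" and TH: "\<And>y. T y = 0 \<Longrightarrow> T (H y) = 0"
  shows "f \<noteq> 0 \<Longrightarrow> T n = 0 \<Longrightarrow> n \<noteq> 0 \<Longrightarrow> hact f n = 0 \<Longrightarrow> \<exists>w \<mu>. w \<noteq> 0 \<and> T w = 0 \<and> H w = sc \<mu> w"
proof (induction "degree f" arbitrary: f n rule: less_induct)
  case less
  show ?case
  proof (cases "degree f = 0")
    case True
    then obtain a where f: "f = pCons a 0" by (rule degree_eq_zeroE)
    with less have "a \<noteq> 0" by auto
    moreover have "hact f n = sc a n"
      using V.linear_self_zero[OF linear_H] by (simp add: f hact_pCons hact_0)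
    ultimately show ?thesis using less by simp
  next
    case False
    then obtain z where "poly f z = 0"
      using fundamental_theorem_of_algebra[of f] constant_degree[of f] by auto
    then obtain g where fg: "f = [:-z, 1:] * g" by (meson dvdE poly_eq_0_iff_dvd)
    have g0: "g \<noteq> 0" using less fg by auto
    have deg: "degree g < degree f" using fg g0 degree_mult_eq[of "[:-z, 1:]" g] by simp
    have "f = smult (-z) g + pCons 0 g" using fg by simp
    then have hact_f: "hact f n = sc (-z) (hact g n) + H (hact g n)"
      by (simp only: hact_add hact_smult hact_pCons V.scale_zero_left add_0_left)
    show ?thesis
    proof (cases "hact g n = 0")
      case True
      then show ?thesis using less(1)[OF deg g0 less(3) less(4)] by blast
    next
      case False
      have "T (hact g n) = 0" by (rule hact_preserves_kernel[OF T TH less(3)])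
      moreover have "H (hact g n) = sc z (hact g n)"
        using hact_f less(5) by (simp add: algebra_simps)
      ultimately show ?thesis using False by blast
    qed
  qed
qed

lemma d_commutator_annihilator:
  assumes nilpotent: "pw (Gen GD) (Suc k) \<in> annL sc U D H"
    and nonzero: "nonzeroL \<phi> r s \<gamma>
      (Sub (Mul (pw (Gen GD) (Suc k)) (Gen GU)) (Mul (Sc (s ^ Suc k)) (Mul (Gen GU) (pw (Gen GD) (Suc k)))))"
  shows "\<exists>f. f \<noteq> 0 \<and> Mul (hpoly f) (pw (Gen GD) k) \<in> annL sc U D H"
proof -
  obtain g where g: "eqL \<phi> r s \<gamma>
      (Sub (Mul (pw (Gen GD) (Suc k)) (Gen GU)) (Mul (Sc (s ^ Suc k)) (Mul (Gen GU) (pw (Gen GD) (Suc k)))))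
      (Mul (hpoly g) (pw (Gen GD) k))"
    using d_power_commutator by blast
  have "g \<noteq> 0"
  proof
    assume "g = 0"
    then have "eqL \<phi> r s \<gamma> (Mul (hpoly g) (pw (Gen GD) k)) (Sc 0)" by (simp add: hpoly_0 mul_zero_left)
    then show False using nonzero eqL.trans[OF g] by (simp add: nonzeroL_def)
  qed
  moreover have "Sub (Mul (pw (Gen GD) (Suc k)) (Gen GU)) (Mul (Sc (s ^ Suc k)) (Mul (Gen GU) (pw (Gen GD) (Suc k))))
      \<in> annL sc U D H"
    using nilpotent V.linear_self_zero[OF linear_U] by (simp add: annL_def Sub_def act_pw)
  ultimately show ?thesis using act_respects_eqL[OF g] by (auto simp: annL_def)
qed

lemma u_commutator_annihilator:
  assumes r: "r \<noteq> 0" and nilpotent: "pw (Gen GU) (Suc k) \<in> annL sc U D H"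
    and nonzero: "nonzeroL \<phi> r s \<gamma>
      (Sub (Mul (Gen GD) (pw (Gen GU) (Suc k))) (Mul (Sc (s ^ Suc k)) (Mul (pw (Gen GU) (Suc k)) (Gen GD))))"
  shows "\<exists>f. f \<noteq> 0 \<and> Mul (hpoly f) (pw (Gen GU) k) \<in> annL sc U D H"
proof -
  obtain g where g: "eqL \<phi> r s \<gamma>
      (Sub (Mul (Gen GD) (pw (Gen GU) (Suc k))) (Mul (Sc (s ^ Suc k)) (Mul (pw (Gen GU) (Suc k)) (Gen GD))))
      (Mul (hpoly g) (pw (Gen GU) k))"
    using u_power_commutator[OF r] by blast
  have "g \<noteq> 0"
  proof
    assume "g = 0"
    then have "eqL \<phi> r s \<gamma> (Mul (hpoly g) (pw (Gen GU) k)) (Sc 0)" by (simp add: hpoly_0 mul_zero_left)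
    then show False using nonzero eqL.trans[OF g] by (simp add: nonzeroL_def)
  qed
  moreover have "Sub (Mul (Gen GD) (pw (Gen GU) (Suc k))) (Mul (Sc (s ^ Suc k)) (Mul (pw (Gen GU) (Suc k)) (Gen GD)))
      \<in> annL sc U D H"
    using nilpotent V.linear_self_zero[OF linear_D] by (simp add: annL_def Sub_def act_pw)
  ultimately show ?thesis using act_respects_eqL[OF g] by (auto simp: annL_def)
qed

end

locale simple_L_module = L_module +
  assumes simple: "\<forall>W. V.subspace W \<and> (\<forall>w\<in>W. U w \<in> W \<and> D w \<in> W \<and> H w \<in> W)
    \<longrightarrow> W = {0} \<or> W = UNIV"
begin

text \<open>If d^(k+1) M = 0 \<noteq> d^k M and f(h) d^k M = 0 with f \<noteq> 0, then ker d contains an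
  h-eigenvector w; the vectors u^i w are h-eigenvectors lowered by d, so M is finite-dimensional.\<close>

lemma fin_dim_from_D:
  assumes nilpotent: "\<And>v. (D ^^ Suc k) v = 0" and nonzero: "(D ^^ k) v \<noteq> 0"
    and f: "f \<noteq> 0" and killed: "\<And>v. hact f ((D ^^ k) v) = 0"
  shows "\<exists>S. finite S \<and> V.span S = UNIV"
proof -
  have kernel_H: "D (H y) = 0" if "D y = 0" for y
    using d_h_rule[of y] that V.linear_self_zero[OF linear_H] by simp
  obtain w \<mu>0 where w: "w \<noteq> 0" "D w = 0" "H w = sc \<mu>0 w"
    using kernel_eigenvector[OF linear_D kernel_H f _ nonzero killed] nilpotent[of v] by auto
  have eigen: "\<exists>\<mu>. H ((U ^^ i) w) = sc \<mu> ((U ^^ i) w)" for i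
  proof (induction i)
    case 0
    then show ?case using w by auto
  next
    case (Suc i)
    then obtain \<mu> where "H ((U ^^ i) w) = sc \<mu> ((U ^^ i) w)" by blast
    then have "H ((U ^^ Suc i) w) = sc (r * \<mu> + \<gamma>) ((U ^^ Suc i) w)"
      using h_u_rule[of "(U ^^ i) w"]
      by (simp add: V.linear_self_scale[OF linear_U] V.scale_left_distrib)
    then show ?case by blast
  qed
  have lowering: "\<exists>c. D ((U ^^ Suc i) w) = sc c ((U ^^ i) w)" for i
  proof (induction i)
    case 0
    have "D (U w) = sc (poly \<phi> \<mu>0) w"
      using d_u_rule[of w] w hact_eigenvector[OF w(3)] V.linear_self_zero[OF linear_U] by simp
    then show ?case by auto
  next
    case (Suc i)
    then obtain c where c: "D ((U ^^ Suc i) w) = sc c ((U ^^ i) w)" by blast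
    obtain \<mu> where \<mu>: "H ((U ^^ Suc i) w) = sc \<mu> ((U ^^ Suc i) w)" using eigen by blast
    have "D ((U ^^ Suc (Suc i)) w) = sc (s * c + poly \<phi> \<mu>) ((U ^^ Suc i) w)"
      using d_u_rule[of "(U ^^ Suc i) w"] c hact_eigenvector[OF \<mu>]
      by (simp add: V.linear_self_scale[OF linear_U] V.scale_left_distrib)
    then show ?case by blast
  qed
  show ?thesis
    using V.weight_string_finite_dim[OF linear_U linear_D linear_H _ w(1,2) eigen lowering nilpotent]
      simple by blast
qed

text \<open>The mirror statement for u, with the roles of u and d exchanged; now r, s \<noteq> 0 is
  needed to solve the relations for the action on ker u.\<close>

lemma fin_dim_from_U:
  assumes r: "r \<noteq> 0" and s: "s \<noteq> 0"
    and nilpotent: "\<And>v. (U ^^ Suc k) v = 0" and nonzero: "(U ^^ k) v \<noteq> 0"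
    and f: "f \<noteq> 0" and killed: "\<And>v. hact f ((U ^^ k) v) = 0"
  shows "\<exists>S. finite S \<and> V.span S = UNIV"
proof -
  have kernel_H: "U (H y) = 0" if "U y = 0" for y
  proof -
    have "sc r (U (H y)) = sc 0 y"
      using h_u_rule[of y] that V.linear_self_zero[OF linear_H] by simp
    then show ?thesis using r by simp
  qed
  obtain w \<mu>0 where w: "w \<noteq> 0" "U w = 0" "H w = sc \<mu>0 w"
    using kernel_eigenvector[OF linear_U kernel_H f _ nonzero killed] nilpotent[of v] by auto
  have eigen: "\<exists>\<mu>. H ((D ^^ i) w) = sc \<mu> ((D ^^ i) w)" for i
  proof (induction i)
    case 0
    then show ?case using w by auto
  next
    case (Suc i)
    then obtain \<mu> where "H ((D ^^ i) w) = sc \<mu> ((D ^^ i) w)" by blast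
    then have "sc r (H ((D ^^ Suc i) w)) = sc (\<mu> - \<gamma>) ((D ^^ Suc i) w)"
      using d_h_rule[of "(D ^^ i) w"]
      by (simp add: V.linear_self_scale[OF linear_D] algebra_simps V.scale_left_diff_distrib)
    then show ?case using V.scale_solve r by blast
  qed
  have lowering: "\<exists>c. U ((D ^^ Suc i) w) = sc c ((D ^^ i) w)" for i
  proof (induction i)
    case 0
    have "0 = sc s (U (D w)) + sc (poly \<phi> \<mu>0) w"
      using d_u_rule[of w] w hact_eigenvector[OF w(3)] V.linear_self_zero[OF linear_D] by simp
    then have "sc s (U (D w)) = sc (- poly \<phi> \<mu>0) w" by (simp add: eq_neg_iff_add_eq_0)
    then have "U (D w) = sc (- poly \<phi> \<mu>0 / s) w" by (rule V.scale_solve[OF s])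
    then have "U ((D ^^ Suc 0) w) = sc (- poly \<phi> \<mu>0 / s) ((D ^^ 0) w)"
      unfolding funpow.simps comp_apply id_apply .
    then show ?case by blast
  next
    case (Suc i)
    then obtain c where c: "U ((D ^^ Suc i) w) = sc c ((D ^^ i) w)" by blast
    obtain \<mu> where \<mu>: "H ((D ^^ Suc i) w) = sc \<mu> ((D ^^ Suc i) w)" using eigen by blast
    have "sc c ((D ^^ Suc i) w) = sc s (U ((D ^^ Suc (Suc i)) w)) + sc (poly \<phi> \<mu>) ((D ^^ Suc i) w)"
      using d_u_rule[of "(D ^^ Suc i) w"] c hact_eigenvector[OF \<mu>]
      by (simp add: V.linear_self_scale[OF linear_D])
    then have "sc s (U ((D ^^ Suc (Suc i)) w)) = sc (c - poly \<phi> \<mu>) ((D ^^ Suc i) w)"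
      by (simp add: algebra_simps V.scale_left_diff_distrib)
    then show ?case using V.scale_solve[OF s] by blast
  qed
  show ?thesis
    using V.weight_string_finite_dim[OF linear_D linear_U linear_H _ w(1,2) eigen lowering nilpotent]
      simple by blast
qed

lemma fin_dim_D_annihilator:
  assumes "pw (Gen GD) (Suc k) \<in> annL sc U D H" and "pw (Gen GD) k \<notin> annL sc U D H"
    and "f \<noteq> 0" and "Mul (hpoly f) (pw (Gen GD) k) \<in> annL sc U D H"
  shows "fin_dim_module sc"
  using fin_dim_from_D[of k _ f] assms by (auto simp: annL_def act_pw fin_dim_module_def)

lemma fin_dim_U_annihilator:
  assumes "r \<noteq> 0" and "s \<noteq> 0"
    and "pw (Gen GU) (Suc k) \<in> annL sc U D H" and "pw (Gen GU) k \<notin> annL sc U D H"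
    and "f \<noteq> 0" and "Mul (hpoly f) (pw (Gen GU) k) \<in> annL sc U D H"
  shows "fin_dim_module sc"
  using fin_dim_from_U[of k _ f] assms by (auto simp: annL_def act_pw fin_dim_module_def)

end

theorem mainTheorem4:
  fixes \<phi> :: "complex poly" and r s \<gamma> :: complex
    and sc :: "complex \<Rightarrow> 'v \<Rightarrow> 'v::ab_group_add" and U D H :: "'v \<Rightarrow> 'v" and m :: nat
  assumes "r * s \<noteq> 0"
    and "is_simple_L_module \<phi> r s \<gamma> sc U D H"
    and "m \<ge> 1"
  shows
    "((pw (Gen GD) m \<in> annL sc U D H \<and> pw (Gen GD) (m - 1) \<notin> annL sc U D H \<and>
       (\<exists>f. degree f \<ge> 1 \<and> Mul (hpoly f) (pw (Gen GD) (m - 1)) \<in> annL sc U D H))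
        \<longrightarrow> fin_dim_module sc)
   \<and> ((pw (Gen GU) m \<in> annL sc U D H \<and> pw (Gen GU) (m - 1) \<notin> annL sc U D H \<and>
       (\<exists>f. degree f \<ge> 1 \<and> Mul (hpoly f) (pw (Gen GU) (m - 1)) \<in> annL sc U D H))
        \<longrightarrow> fin_dim_module sc)
   \<and> ((pw (Gen GD) m \<in> annL sc U D H \<and> pw (Gen GD) (m - 1) \<notin> annL sc U D H \<and>
       nonzeroL \<phi> r s \<gamma>
         (Sub (Mul (pw (Gen GD) m) (Gen GU)) (Mul (Sc (s ^ m)) (Mul (Gen GU) (pw (Gen GD) m)))))
        \<longrightarrow> fin_dim_module sc)
   \<and> ((pw (Gen GU) m \<in> annL sc U D H \<and> pw (Gen GU) (m - 1) \<notin> annL sc U D H \<and>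
       nonzeroL \<phi> r s \<gamma>
         (Sub (Mul (Gen GD) (pw (Gen GU) m)) (Mul (Sc (s ^ m)) (Mul (pw (Gen GU) m) (Gen GD)))))
        \<longrightarrow> fin_dim_module sc)"
proof -
  interpret simple_L_module \<phi> r s \<gamma> sc U D H
    using assms(2) by unfold_locales (simp_all add: is_simple_L_module_def)
  obtain k where m: "m = Suc k" using assms(3) by (cases m) auto
  have r: "r \<noteq> 0" and s: "s \<noteq> 0" using assms(1) by auto
  have nonconstant: "f \<noteq> 0" if "degree f \<ge> 1" for f :: "complex poly" using that by auto
  show ?thesis
    unfolding m diff_Suc_1
    using fin_dim_D_annihilator fin_dim_U_annihilator[OF r s] nonconstant
      d_commutator_annihilator u_commutator_annihilator[OF r]
    by meson
qed

end
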